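(* Let $\Sigma$ be a non-empty finite or countably infinite alphabet, $p$ a positive Bernoulli distribution on $\Sigma$, and $A=(Q,\Sigma,\delta,q_s,F)$ a strongly connected DFA with $F\neq\emptyset$. Then there exists a real number $c>0$ such that for every $\epsilon>0$, $\lim_{n\to\infty}\mu_p(E_n(c-\epsilon))=0$.
   Context: $p:\Sigma\to(0,1]$ with $\sum_ap(a)=1$; $\mu_p(a_1\cdots a_n)=\prod_ip(a_i)$ and for $W\subseteq\Sigma^*$, $\mu_p(W)=\sum_{w\in W}\mu_p(w)$. For $q\in Q$, $A_q$ denotes the DFA $A$ with start state $q$, and for a word $w=w_1\cdots w_n$, $A_q[w]$ is the subsequence of those $w_i$ with $\delta^*(q,w_1\cdots w_{i-1})\in F$. For real $b$ and $n\ge1$: $E_n(b,q)=\{w\in\Sigma^n: |A_q[w]|\le bn\}$ and $E_n(b)=\bigcup_{q\in Q}E_n(b,q)$. $A$ is strongly connected if its underlying directed graph (edges $q\to\delta(q,a)$) is strongly connected. *)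

theory Defs
  imports "HOL-Analysis.Analysis"
begin

definition dfa :: "'q set \<Rightarrow> 'a set \<Rightarrow> ('q \<Rightarrow> 'a \<Rightarrow> 'q) \<Rightarrow> 'q \<Rightarrow> 'q set \<Rightarrow> bool" where
  "dfa Q Sig delta qs F \<longleftrightarrow> finite Q \<and> qs \<in> Q \<and> F \<subseteq> Q \<and>
     (\<forall>q\<in>Q. \<forall>a\<in>Sig. delta q a \<in> Q)"

fun delta_star :: "('q \<Rightarrow> 'a \<Rightarrow> 'q) \<Rightarrow> 'q \<Rightarrow> 'a list \<Rightarrow> 'q" where
  "delta_star delta q [] = q"
| "delta_star delta q (a # w) = delta_star delta (delta q a) w"

definition strongly_connected :: "'q set \<Rightarrow> 'a set \<Rightarrow> ('q \<Rightarrow> 'a \<Rightarrow> 'q) \<Rightarrow> bool" where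
  "strongly_connected Q Sig delta \<longleftrightarrow>
     (\<forall>q\<in>Q. \<forall>q'\<in>Q. (q, q') \<in> (Restr {(x, delta x a) | x a. x \<in> Q \<and> a \<in> Sig} Q)\<^sup>*)"

text \<open>A_q[w]: subsequence of letters w_i read while the current state
  delta*(q, w_1...w_(i-1)) lies in F.\<close>
fun run_sub :: "('q \<Rightarrow> 'a \<Rightarrow> 'q) \<Rightarrow> 'q set \<Rightarrow> 'q \<Rightarrow> 'a list \<Rightarrow> 'a list" where
  "run_sub delta F q [] = []"
| "run_sub delta F q (a # w) =
     (if q \<in> F then a # run_sub delta F (delta q a) w else run_sub delta F (delta q a) w)"

definition mu :: "('a \<Rightarrow> real) \<Rightarrow> 'a list set \<Rightarrow> real" where
  "mu p W = infsum (\<lambda>w. prod_list (map p w)) W"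

definition E_q :: "'a set \<Rightarrow> ('q \<Rightarrow> 'a \<Rightarrow> 'q) \<Rightarrow> 'q set \<Rightarrow> nat \<Rightarrow> real \<Rightarrow> 'q \<Rightarrow> 'a list set" where
  "E_q Sig delta F n b q =
     {w. set w \<subseteq> Sig \<and> length w = n \<and> real (length (run_sub delta F q w)) \<le> b * real n}"

definition E :: "'q set \<Rightarrow> 'a set \<Rightarrow> ('q \<Rightarrow> 'a \<Rightarrow> 'q) \<Rightarrow> 'q set \<Rightarrow> nat \<Rightarrow> real \<Rightarrow> 'a list set" where
  "E Q Sig delta F n b = (\<Union>q\<in>Q. E_q Sig delta F n b q)"

end

theory Submission
  imports Defs "HOL-Real_Asymp.Real_Asymp"
begin

text \<open>Consider the expectation \<open>mgf n q\<close> of \<open>2^(-|A_q[w]|)\<close> over words \<open>w\<close> of length \<open>n\<close>.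
  Every letter read in a final state halves the weight, so the maximum \<open>mgf_max n\<close> over all states
  is submultiplicative in \<open>n\<close>. By strong connectivity every state reaches \<open>F\<close> with positive
  probability within a bounded number \<open>k\<close> of steps, hence \<open>mgf_max k < 1\<close>, and submultiplicativity
  yields \<open>mgf_max n \<le> C 2^(-cn)\<close>. The Chernoff bound
  \<open>\<mu>(E_n(b)) \<le> 2^(bn) |Q| mgf_max n\<close> then decays like \<open>2^(-\<epsilon>n)\<close> for \<open>b = c - \<epsilon>\<close>.\<close>

lemma delta_star_snoc: "delta_star delta q (u @ [a]) = delta (delta_star delta q u) a"
  by (induction u arbitrary: q) auto

lemma word_of_rtrancl_transitions:
  assumes "(q, q') \<in> (Restr {(x, delta x a) | x a. x \<in> Q \<and> a \<in> Sig} Q)\<^sup>*"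
  shows "\<exists>u. set u \<subseteq> Sig \<and> delta_star delta q u = q'"
  using assms
proof (induction rule: rtrancl_induct)
  case base
  show ?case by (intro exI[of _ "[]"]) simp
next
  case (step y z)
  then obtain u b where "set u \<subseteq> Sig" "delta_star delta q u = y" "b \<in> Sig" "z = delta y b"
    by blast
  then show ?case by (intro exI[of _ "u @ [b]"]) (simp add: delta_star_snoc)
qed

lemma inj_on_case_prod_Cons: "inj_on (\<lambda>(a, w). a # w) X"
  by (auto simp: inj_on_def)

lemma has_sum_sum:
  fixes f :: "'i \<Rightarrow> 'a \<Rightarrow> 'b::topological_comm_monoid_add"
  assumes "finite I" and "\<And>i. i \<in> I \<Longrightarrow> (f i has_sum s i) A"
  shows "((\<lambda>x. \<Sum>i\<in>I. f i x) has_sum (\<Sum>i\<in>I. s i)) A"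
  using assms by (induction I rule: finite_induct) (auto intro: has_sum_add)

lemma submultiplicative_le_power:
  fixes h :: "nat \<Rightarrow> real"
  assumes "\<And>n. 0 \<le> h n" and "\<And>n. h n \<le> 1" and "\<And>j n. h (j + n) \<le> h j * h n"
  shows "h (k * m + r) \<le> h k ^ m"
proof (induction m)
  case 0
  then show ?case using assms(2) by simp
next
  case (Suc m)
  have "h (k * Suc m + r) = h (k + (k * m + r))" by (simp add: algebra_simps)
  also have "\<dots> \<le> h k * h (k * m + r)" by (rule assms(3))
  also have "\<dots> \<le> h k * h k ^ m" using Suc assms(1) by (simp add: mult_left_mono)
  finally show ?case by simp
qed

lemma submultiplicative_exponential_decay:
  fixes h :: "nat \<Rightarrow> real"
  assumes "\<And>n. 0 \<le> h n" and "\<And>n. h n \<le> 1" and "\<And>j n. h (j + n) \<le> h j * h n"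
    and "0 < k" and "h k < 1"
  shows "\<exists>c>0. \<exists>C. \<forall>n. h n \<le> C * 2 powr (- c * n)"
proof -
  define \<beta> where "\<beta> = max (h k) (1/2)"
  define c where "c = - log 2 \<beta> / k"
  have "0 < \<beta>" "\<beta> < 1" "h k \<le> \<beta>"
    using \<open>h k < 1\<close> by (auto simp: \<beta>_def)
  then have "log 2 \<beta> < 0" by simp
  then have "c > 0"
    using \<open>0 < k\<close> by (simp add: c_def divide_neg_pos)
  have "h n \<le> 2 powr (c * k) * 2 powr (- c * n)" for n
  proof -
    have "h n = h (k * (n div k) + n mod k)" by simp
    also have "\<dots> \<le> h k ^ (n div k)" by (rule submultiplicative_le_power[OF assms(1-3)])
    also have "\<dots> \<le> \<beta> ^ (n div k)" using \<open>h k \<le> \<beta>\<close> assms(1) by (simp add: power_mono)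
    also have "\<dots> = 2 powr (log 2 \<beta> * (n div k))"
      using \<open>0 < \<beta>\<close> by (simp add: powr_powr[symmetric] powr_realpow)
    also have "\<dots> = 2 powr (- c * (k * (n div k)))"
      using \<open>0 < k\<close> by (simp add: c_def)
    also have "\<dots> \<le> 2 powr (c * k + - c * n)"
    proof -
      have "n < k * (n div k) + k"
        using \<open>0 < k\<close> by (metis add_less_cancel_left div_mult_mod_eq mod_less_divisor mult.commute)
      then have "real n \<le> real k * real (n div k) + real k"
        by (metis less_imp_le of_nat_add of_nat_le_iff of_nat_mult)
      then have "c * n \<le> c * (k * (n div k) + k)"
        using \<open>c > 0\<close> by (simp add: mult_left_mono)
      then show ?thesis by (simp add: algebra_simps)
    qed
    finally show ?thesis by (simp add: powr_add[symmetric])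
  qed
  then show ?thesis using \<open>c > 0\<close> by blast
qed

locale bernoulli_dfa =
  fixes Q :: "'q set" and Sig :: "'a set" and delta :: "'q \<Rightarrow> 'a \<Rightarrow> 'q"
    and F :: "'q set" and p :: "'a \<Rightarrow> real"
  assumes p_pos: "\<And>a. a \<in> Sig \<Longrightarrow> 0 < p a"
    and p_has_sum: "(p has_sum 1) Sig"
    and delta_closed: "\<And>q a. q \<in> Q \<Longrightarrow> a \<in> Sig \<Longrightarrow> delta q a \<in> Q"
    and finite_Q: "finite Q" and Q_nonempty: "Q \<noteq> {}"
begin

definition words :: "nat \<Rightarrow> 'a list set" where
  "words n = {w. set w \<subseteq> Sig \<and> length w = n}"

abbreviation word_prob :: "'a list \<Rightarrow> real" where
  "word_prob w \<equiv> prod_list (map p w)"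

abbreviation F_visits :: "'q \<Rightarrow> 'a list \<Rightarrow> nat" where
  "F_visits q w \<equiv> length (run_sub delta F q w)"

definition mgf :: "nat \<Rightarrow> 'q \<Rightarrow> real" where
  "mgf n q = infsum (\<lambda>w. word_prob w * (1/2) ^ F_visits q w) (words n)"

definition mgf_max :: "nat \<Rightarrow> real" where
  "mgf_max n = Max (mgf n ` Q)"

lemma p_nonneg: "a \<in> Sig \<Longrightarrow> 0 \<le> p a"
  using p_pos less_imp_le by blast

lemma p_summable: "p summable_on Sig"
  using p_has_sum has_sum_imp_summable by blast

lemma word_prob_pos: "set w \<subseteq> Sig \<Longrightarrow> 0 < word_prob w"
  by (induction w) (auto simp: p_pos)

lemma word_prob_nonneg: "w \<in> words n \<Longrightarrow> 0 \<le> word_prob w"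
  using word_prob_pos by (auto simp: words_def less_imp_le)

lemma words_0: "words 0 = {[]}"
  by (auto simp: words_def)

lemma words_Suc: "words (Suc n) = (\<lambda>(a, w). a # w) ` (Sig \<times> words n)"
proof -
  have "w \<in> (\<lambda>(a, w). a # w) ` (Sig \<times> words n)" if "w \<in> words (Suc n)" for w
    using that by (cases w) (auto simp: words_def)
  then show ?thesis by (auto simp: words_def)
qed

lemma has_sum_word_prob: "(word_prob has_sum 1) (words n)"
proof (induction n)
  case 0
  show ?case by (simp add: words_0 has_sum_finiteI)
next
  case (Suc n)
  let ?f = "\<lambda>(a, w). p a * word_prob w"
  have rows: "((\<lambda>w. ?f (a, w)) has_sum p a) (words n)" for a
    using has_sum_cmult_right[OF Suc.IH] by simp
  have "?f summable_on Sig \<times> words n"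
    by (rule summable_on_SigmaI[OF rows p_summable])
       (auto intro!: mult_nonneg_nonneg p_nonneg word_prob_nonneg)
  then have "(?f has_sum 1) (Sig \<times> words n)"
    by (rule has_sum_SigmaI[OF rows p_has_sum])
  moreover have "word_prob \<circ> (\<lambda>(a, w). a # w) = ?f" by (auto simp: fun_eq_iff)
  ultimately show ?case
    by (simp add: words_Suc has_sum_reindex[OF inj_on_case_prod_Cons])
qed

lemma word_prob_summable: "word_prob summable_on words n"
  using has_sum_word_prob has_sum_imp_summable by blast

lemma infsum_words_Suc:
  assumes "\<And>w. w \<in> words (Suc n) \<Longrightarrow> 0 \<le> h w \<and> h w \<le> word_prob w"
  shows "infsum h (words (Suc n)) = infsum (\<lambda>a. infsum (\<lambda>w. h (a # w)) (words n)) Sig"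
proof -
  have "infsum h (words (Suc n)) = infsum (h \<circ> (\<lambda>(a, w). a # w)) (Sig \<times> words n)"
    by (simp add: words_Suc infsum_reindex[OF inj_on_case_prod_Cons])
  also have "\<dots> = infsum (\<lambda>a. infsum (\<lambda>w. (h \<circ> (\<lambda>(a, w). a # w)) (a, w)) (words n)) Sig"
  proof (rule infsum_Sigma_banach[symmetric])
    have "(word_prob \<circ> (\<lambda>(a, w). a # w)) summable_on Sig \<times> words n"
      using word_prob_summable[of "Suc n"]
      by (simp add: words_Suc summable_on_reindex[OF inj_on_case_prod_Cons])
    then show "(h \<circ> (\<lambda>(a, w). a # w)) summable_on Sig \<times> words n"
      by (rule summable_on_comparison_test) (use assms in \<open>auto simp: words_Suc\<close>)
  qed
  finally show ?thesis by simp
qed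

lemma mgf_term_bounds:
  assumes "w \<in> words n"
  shows "0 \<le> word_prob w * (1/2) ^ F_visits q w \<and> word_prob w * (1/2) ^ F_visits q w \<le> word_prob w"
  using word_prob_nonneg[OF assms] by (simp add: mult_left_le power_le_one)

lemma has_sum_mgf: "((\<lambda>w. word_prob w * (1/2) ^ F_visits q w) has_sum mgf n q) (words n)"
proof -
  have "(\<lambda>w. word_prob w * (1/2) ^ F_visits q w) summable_on words n"
    by (rule summable_on_comparison_test[OF word_prob_summable]) (use mgf_term_bounds in auto)
  then show ?thesis by (simp add: mgf_def summable_iff_has_sum_infsum)
qed

lemma mgf_nonneg: "0 \<le> mgf n q"
  unfolding mgf_def by (rule infsum_nonneg) (use mgf_term_bounds in blast)

lemma mgf_le_one: "mgf n q \<le> 1"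
  by (rule has_sum_mono[OF has_sum_mgf has_sum_word_prob]) (use mgf_term_bounds in blast)

lemma mgf_0: "mgf 0 q = 1"
  by (simp add: mgf_def words_0)

lemma p_mgf_summable: "(\<lambda>a. p a * mgf n (delta q a)) summable_on Sig"
  by (rule summable_on_comparison_test[OF p_summable])
     (simp_all add: mgf_nonneg mgf_le_one p_nonneg mult_left_le)

lemma mgf_Suc:
  "mgf (Suc n) q = (if q \<in> F then 1/2 else 1) * infsum (\<lambda>a. p a * mgf n (delta q a)) Sig"
proof -
  let ?c = "if q \<in> F then 1/2 else 1 :: real"
  have "mgf (Suc n) q
      = infsum (\<lambda>a. infsum (\<lambda>w. word_prob (a # w) * (1/2) ^ F_visits q (a # w)) (words n)) Sig"
    unfolding mgf_def by (rule infsum_words_Suc) (rule mgf_term_bounds)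
  also have "\<dots> = infsum (\<lambda>a. ?c * (p a * mgf n (delta q a))) Sig"
  proof (rule infsum_cong)
    fix a
    have "infsum (\<lambda>w. word_prob (a # w) * (1/2) ^ F_visits q (a # w)) (words n)
        = infsum (\<lambda>w. (?c * p a) * (word_prob w * (1/2) ^ F_visits (delta q a) w)) (words n)"
      by (rule infsum_cong) (simp add: power_add)
    also have "\<dots> = ?c * (p a * mgf n (delta q a))"
      by (simp add: infsum_cmult_right' mgf_def)
    finally show "infsum (\<lambda>w. word_prob (a # w) * (1/2) ^ F_visits q (a # w)) (words n)
        = ?c * (p a * mgf n (delta q a))" .
  qed
  also have "\<dots> = ?c * infsum (\<lambda>a. p a * mgf n (delta q a)) Sig"
    by (rule infsum_cmult_right')
  finally show ?thesis .
qed

lemma infsum_p_mgf_le_one: "infsum (\<lambda>a. p a * mgf n (delta q a)) Sig \<le> 1"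
  using p_mgf_summable
  by (rule has_sum_mono[OF has_sum_infsum p_has_sum]) (simp add: mgf_le_one p_nonneg mult_left_le)

lemma mgf_Suc_le: "mgf (Suc n) q \<le> infsum (\<lambda>a. p a * mgf n (delta q a)) Sig"
proof -
  have "0 \<le> infsum (\<lambda>a. p a * mgf n (delta q a)) Sig"
    by (rule infsum_nonneg) (simp add: mgf_nonneg p_nonneg)
  then show ?thesis by (simp add: mgf_Suc)
qed

lemma mgf_le_mgf_max: "q \<in> Q \<Longrightarrow> mgf n q \<le> mgf_max n"
  unfolding mgf_max_def using finite_Q by simp

lemma mgf_max_attained: "\<exists>q\<in>Q. mgf_max n = mgf n q"
  unfolding mgf_max_def using finite_Q Q_nonempty
  by (metis (mono_tags, lifting) Max_in finite_imageI image_iff image_is_empty)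

lemma mgf_max_nonneg: "0 \<le> mgf_max n"
  using mgf_max_attained mgf_nonneg by metis

lemma mgf_max_le_one: "mgf_max n \<le> 1"
  using mgf_max_attained mgf_le_one by metis

lemma mgf_add_le: "q \<in> Q \<Longrightarrow> mgf (j + n) q \<le> mgf j q * mgf_max n"
proof (induction j arbitrary: q)
  case 0
  then show ?case by (simp add: mgf_0 mgf_le_mgf_max)
next
  case (Suc j)
  let ?c = "if q \<in> F then 1/2 else 1 :: real"
  have "infsum (\<lambda>a. p a * mgf (j + n) (delta q a)) Sig
      \<le> infsum (\<lambda>a. p a * mgf j (delta q a) * mgf_max n) Sig"
  proof (rule infsum_mono[OF p_mgf_summable summable_on_cmult_left[OF p_mgf_summable]])
    fix a assume "a \<in> Sig"
    then have "mgf (j + n) (delta q a) \<le> mgf j (delta q a) * mgf_max n"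
      using Suc delta_closed by blast
    then show "p a * mgf (j + n) (delta q a) \<le> p a * mgf j (delta q a) * mgf_max n"
      using p_nonneg[OF \<open>a \<in> Sig\<close>] by (simp add: mult.assoc mult_left_mono)
  qed
  then have "mgf (Suc j + n) q \<le> ?c * (infsum (\<lambda>a. p a * mgf j (delta q a)) Sig * mgf_max n)"
    by (simp add: mgf_Suc infsum_cmult_left')
  then show ?case by (simp add: mgf_Suc mult.assoc)
qed

lemma mgf_max_add_le: "mgf_max (j + n) \<le> mgf_max j * mgf_max n"
proof -
  obtain q where "q \<in> Q" "mgf_max (j + n) = mgf (j + n) q"
    using mgf_max_attained by blast
  moreover have "mgf j q * mgf_max n \<le> mgf_max j * mgf_max n"
    using \<open>q \<in> Q\<close> mgf_le_mgf_max mgf_max_nonneg by (simp add: mult_right_mono)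
  ultimately show ?thesis using mgf_add_le[of q j n] by simp
qed

lemma infsum_p_Diff_singleton: "a \<in> Sig \<Longrightarrow> infsum p (Sig - {a}) = 1 - p a"
  using infsum_insert[OF summable_on_subset[OF p_summable], of "Sig - {a}" a]
    p_has_sum infsumI by (fastforce simp: insert_absorb)

lemma mgf_le_if_word_reaches_F:
  assumes "q \<in> Q" "set u \<subseteq> Sig" "delta_star delta q u \<in> F" "length u < j"
  shows "mgf j q \<le> 1 - word_prob u / 2"
  using assms
proof (induction u arbitrary: q j)
  case Nil
  then obtain j' where "j = Suc j'" by (cases j) auto
  then show ?case using Nil infsum_p_mgf_le_one[of j' q] by (simp add: mgf_Suc)
next
  case (Cons a u)
  then obtain j' where j: "j = Suc j'" by (cases j) auto
  have "a \<in> Sig" using Cons.prems by simp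
  then have IH: "mgf j' (delta q a) \<le> 1 - word_prob u / 2"
    using Cons.IH[of "delta q a" j'] Cons.prems j delta_closed by simp
  let ?f = "\<lambda>b. p b * mgf j' (delta q b)"
  have "mgf j q \<le> infsum ?f Sig" unfolding j by (rule mgf_Suc_le)
  also have "\<dots> = ?f a + infsum ?f (Sig - {a})"
    using infsum_insert[OF summable_on_subset[OF p_mgf_summable], of "Sig - {a}" a] \<open>a \<in> Sig\<close>
    by (simp add: insert_absorb)
  also have "?f a \<le> p a * (1 - word_prob u / 2)"
    using IH p_nonneg[OF \<open>a \<in> Sig\<close>] by (rule mult_left_mono)
  also have "infsum ?f (Sig - {a}) \<le> infsum p (Sig - {a})"
  proof (rule infsum_mono)
    show "?f summable_on Sig - {a}" by (rule summable_on_subset[OF p_mgf_summable]) blast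
    show "p summable_on Sig - {a}" by (rule summable_on_subset[OF p_summable]) blast
    show "?f b \<le> p b" if "b \<in> Sig - {a}" for b
      using that mgf_le_one p_nonneg by (simp add: mult_left_le)
  qed
  finally show ?case using \<open>a \<in> Sig\<close> by (simp add: infsum_p_Diff_singleton algebra_simps)
qed

lemma mgf_max_lt_one:
  assumes "strongly_connected Q Sig delta" and "F \<subseteq> Q" and "F \<noteq> {}"
  shows "\<exists>k>0. mgf_max k < 1"
proof -
  obtain f where "f \<in> F" using assms(3) by blast
  have "\<exists>u. set u \<subseteq> Sig \<and> delta_star delta q u \<in> F" if "q \<in> Q" for q
  proof -
    have "(q, f) \<in> (Restr {(x, delta x a) | x a. x \<in> Q \<and> a \<in> Sig} Q)\<^sup>*"
      using assms(1,2) \<open>f \<in> F\<close> \<open>q \<in> Q\<close> unfolding strongly_connected_def by (simp add: subsetD)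
    then obtain u where "set u \<subseteq> Sig" "delta_star delta q u = f"
      by (blast dest: word_of_rtrancl_transitions)
    then show ?thesis using \<open>f \<in> F\<close> by blast
  qed
  then obtain u where u: "\<And>q. q \<in> Q \<Longrightarrow> set (u q) \<subseteq> Sig \<and> delta_star delta q (u q) \<in> F"
    by metis
  define k where "k = Suc (Max ((\<lambda>q. length (u q)) ` Q))"
  have "mgf k q < 1" if "q \<in> Q" for q
  proof -
    have "length (u q) < k" unfolding k_def using finite_Q \<open>q \<in> Q\<close> by (simp add: le_imp_less_Suc)
    then have "mgf k q \<le> 1 - word_prob (u q) / 2"
      using mgf_le_if_word_reaches_F \<open>q \<in> Q\<close> u by blast
    moreover have "0 < word_prob (u q)" using word_prob_pos u \<open>q \<in> Q\<close> by blast
    ultimately show ?thesis by simp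
  qed
  then have "mgf_max k < 1" using mgf_max_attained[of k] by force
  moreover have "0 < k" by (simp add: k_def)
  ultimately show ?thesis by blast
qed

lemma chernoff_bound:
  "mu p (E Q Sig delta F n b) \<le> 2 powr (b * n) * (card Q * mgf_max n)"
proof -
  let ?g = "\<lambda>w. 2 powr (b * n) * (\<Sum>q\<in>Q. word_prob w * (1/2) ^ F_visits q w)"
  have "(?g has_sum 2 powr (b * n) * (\<Sum>q\<in>Q. mgf n q)) (words n)"
    by (intro has_sum_cmult_right has_sum_sum finite_Q has_sum_mgf)
  have E_words: "E Q Sig delta F n b \<subseteq> words n"
    by (auto simp: E_def E_q_def words_def)
  have "mu p (E Q Sig delta F n b) \<le> infsum ?g (words n)"
    unfolding mu_def
  proof (rule infsum_mono_neutral)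
    show "word_prob summable_on E Q Sig delta F n b"
      using summable_on_subset[OF word_prob_summable E_words] .
    show "?g summable_on words n"
      using \<open>(?g has_sum _) (words n)\<close> has_sum_imp_summable by blast
    show "0 \<le> ?g w" if "w \<in> words n - E Q Sig delta F n b" for w
      using that word_prob_nonneg by (auto intro!: mult_nonneg_nonneg sum_nonneg)
    fix w assume "w \<in> E Q Sig delta F n b \<inter> words n"
    then obtain q where "q \<in> Q" and visits: "real (F_visits q w) \<le> b * n" and "w \<in> words n"
      by (auto simp: E_def E_q_def)
    have "1 \<le> 2 powr (b * n - F_visits q w)"
      using visits by (simp add: ge_one_powr_ge_zero)
    also have "\<dots> = 2 powr (b * n) * (1/2) ^ F_visits q w"
      by (simp add: powr_diff powr_realpow power_one_over)
    finally have "word_prob w * 1 \<le> word_prob w * (2 powr (b * n) * (1/2) ^ F_visits q w)"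
      using word_prob_nonneg[OF \<open>w \<in> words n\<close>] by (rule mult_left_mono)
    then have "word_prob w \<le> 2 powr (b * n) * (word_prob w * (1/2) ^ F_visits q w)"
      by (simp add: mult_ac)
    also have "\<dots> \<le> ?g w"
      using \<open>q \<in> Q\<close> \<open>w \<in> words n\<close> mgf_term_bounds finite_Q
      by (intro mult_left_mono member_le_sum) auto
    finally show "word_prob w \<le> ?g w" .
  qed (use E_words in blast)
  also have "\<dots> = 2 powr (b * n) * (\<Sum>q\<in>Q. mgf n q)"
    using \<open>(?g has_sum _) (words n)\<close> infsumI by blast
  also have "\<dots> \<le> 2 powr (b * n) * (card Q * mgf_max n)"
    using sum_bounded_above[of Q "mgf n" "mgf_max n"] mgf_le_mgf_max by simp
  finally show ?thesis .
qed

lemma mu_E_tendsto_zero: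
  assumes decay: "\<And>n. mgf_max n \<le> C * 2 powr (- c * n)" and "0 < \<epsilon>"
  shows "(\<lambda>n. mu p (E Q Sig delta F n (c - \<epsilon>))) \<longlonglongrightarrow> 0"
proof (rule tendsto_sandwich)
  show "\<forall>\<^sub>F n in sequentially. 0 \<le> mu p (E Q Sig delta F n (c - \<epsilon>))"
    unfolding mu_def E_def E_q_def
    by (intro always_eventually allI infsum_nonneg) (auto intro: less_imp_le word_prob_pos)
  have "mu p (E Q Sig delta F n (c - \<epsilon>)) \<le> card Q * C * 2 powr (- \<epsilon> * n)" for n
  proof -
    have "mu p (E Q Sig delta F n (c - \<epsilon>)) \<le> 2 powr ((c - \<epsilon>) * n) * (card Q * mgf_max n)"
      by (rule chernoff_bound)
    also have "\<dots> \<le> 2 powr ((c - \<epsilon>) * n) * (card Q * (C * 2 powr (- c * n)))"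
      using decay by (intro mult_left_mono) auto
    also have "\<dots> = card Q * C * 2 powr (- \<epsilon> * n)"
      by (simp add: powr_add[symmetric] algebra_simps)
    finally show ?thesis .
  qed
  then show "\<forall>\<^sub>F n in sequentially. mu p (E Q Sig delta F n (c - \<epsilon>)) \<le> card Q * C * 2 powr (- \<epsilon> * n)"
    by simp
  show "(\<lambda>n. card Q * C * 2 powr (- \<epsilon> * n)) \<longlonglongrightarrow> 0"
    using \<open>0 < \<epsilon>\<close> by real_asymp
qed simp

end

theorem lemma5p4:
  fixes Q :: "'q set" and Sig :: "'a set" and delta :: "'q \<Rightarrow> 'a \<Rightarrow> 'q"
    and qs :: 'q and F :: "'q set" and p :: "'a \<Rightarrow> real"
  assumes "Sig \<noteq> {}" and "countable Sig"
    and "\<forall>a\<in>Sig. 0 < p a \<and> p a \<le> 1" and "(p has_sum 1) Sig"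
    and "dfa Q Sig delta qs F" and "strongly_connected Q Sig delta" and "F \<noteq> {}"
  shows "\<exists>c>0. \<forall>\<epsilon>>0. (\<lambda>n. mu p (E Q Sig delta F n (c - \<epsilon>))) \<longlonglongrightarrow> 0"
proof -
  have "F \<subseteq> Q" using assms(5) by (simp add: dfa_def)
  interpret bernoulli_dfa Q Sig delta F p
    using assms \<open>F \<subseteq> Q\<close> by unfold_locales (auto simp: dfa_def)
  obtain k where "0 < k" "mgf_max k < 1"
    using mgf_max_lt_one assms(6,7) \<open>F \<subseteq> Q\<close> by blast
  then obtain c C where "c > 0" "\<And>n. mgf_max n \<le> C * 2 powr (- c * n)"
    using submultiplicative_exponential_decay[of mgf_max k]
      mgf_max_nonneg mgf_max_le_one mgf_max_add_le by blast
  then show ?thesis using mu_E_tendsto_zero by blast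
qed

end
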